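(* For all $p, q, n \in \mathbb{N}$ with $p \le q$, $$u((p,q),n) \;=\; \sum_{i=0}^{n} \binom{p}{i}\binom{p+n-i}{p}\binom{q}{n-i}.$$
   Context: Let $\mathbb{N} = \{0,1,2,\dots\}$. For $(p,q) \in \mathbb{N}^2$ and $n \in \mathbb{N}$, an unrestricted generalized jump path of length $n$ starting at $(p,q)$ is a sequence $(x_0, \dots, x_n)$ of points of $\mathbb{N}^2$ satisfying three conditions: - $x_0 = (p,q)$; - for every $i$, each coordinate of $x_{i+1}$ is at most the corresponding coordinate of $x_i$; - $x_{i+1} \ne x_i$ for every $i$. Let $u((p,q),n)$ denote the number of such paths. Binomial coefficients satisfy $\binom{a}{b}=0$ if $b<0$ or $b>a$. *)

theory Defs
  imports Main
begin

definition ugj_path :: "nat \<times> nat \<Rightarrow> nat \<Rightarrow> (nat \<times> nat) list \<Rightarrow> bool" where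
  "ugj_path s n xs \<longleftrightarrow>
     length xs = Suc n \<and> xs ! 0 = s \<and>
     (\<forall>i<n. fst (xs ! Suc i) \<le> fst (xs ! i) \<and> snd (xs ! Suc i) \<le> snd (xs ! i)
            \<and> xs ! Suc i \<noteq> xs ! i)"

definition u :: "nat \<times> nat \<Rightarrow> nat \<Rightarrow> nat" where
  "u s n = card {xs. ugj_path s n xs}"

end

theory Submission
  imports Defs
begin

text \<open>Dropping its first point, a path of length n + 1 from s is s followed by a path of
  length n from a point strictly below s, so u (s, n + 1) is the sum of u (t, n) over those t.
  The closed form F p q n = \<Sum>k. C(n,k) C(q,k) C(p+k,n) obeys the same recurrence: summing it over
  the box [0,p] \<times> [0,q] is a hockey-stick sum in each coordinate, and Pascal's rule on C(n+1,k)
  identifies the result with F p q (n + 1) + F p q n. Reversing the summation index and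
  exchanging C(p,i) C(p+n-i,p) = C(n,i) C(p+n-i,n) turns F into the stated sum.\<close>

lemma ugj_path_Suc_iff:
  "ugj_path s (Suc n) xs \<longleftrightarrow>
     (\<exists>t ys. xs = s # ys \<and> fst t \<le> fst s \<and> snd t \<le> snd s \<and> t \<noteq> s \<and> ugj_path t n ys)"
  unfolding ugj_path_def All_less_Suc2
  by (cases xs; cases "tl xs") auto

lemma ugj_paths_0: "{xs. ugj_path s 0 xs} = {[s]}"
  unfolding ugj_path_def by (auto simp: length_Suc_conv)

definition strictly_below :: "nat \<times> nat \<Rightarrow> (nat \<times> nat) set" where
  "strictly_below s = {0..fst s} \<times> {0..snd s} - {s}"

lemma finite_strictly_below [simp]: "finite (strictly_below s)"
  unfolding strictly_below_def by simp

lemma ugj_paths_Suc: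
  "{xs. ugj_path s (Suc n) xs} = (\<Union>t\<in>strictly_below s. (#) s ` {ys. ugj_path t n ys})"
  unfolding strictly_below_def ugj_path_Suc_iff by (auto simp: mem_Times_iff) force+

lemma finite_ugj_paths: "finite {xs. ugj_path s n xs}"
  by (induction n arbitrary: s) (simp_all add: ugj_paths_0 ugj_paths_Suc)

lemma u_0: "u s 0 = 1"
  by (simp add: u_def ugj_paths_0)

lemma u_Suc: "u s (Suc n) = (\<Sum>t\<in>strictly_below s. u t n)"
proof -
  have "u s (Suc n) = (\<Sum>t\<in>strictly_below s. card ((#) s ` {ys. ugj_path t n ys}))"
    unfolding u_def ugj_paths_Suc
    by (rule card_UN_disjoint) (auto simp: finite_ugj_paths ugj_path_def)
  also have "\<dots> = (\<Sum>t\<in>strictly_below s. u t n)"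
    by (simp add: u_def card_image)
  finally show ?thesis .
qed

definition ugj_formula :: "nat \<Rightarrow> nat \<Rightarrow> nat \<Rightarrow> nat" where
  "ugj_formula p q n = (\<Sum>k=0..n. (n choose k) * (q choose k) * ((p + k) choose n))"

lemma sum_choose_shifted_upper:
  "k \<le> n \<Longrightarrow> (\<Sum>a=0..p. (a + k) choose n) = Suc (p + k) choose Suc n"
  by (induction p) (auto simp: binomial_eq_0 le_less)

lemma sum_atLeast0_choose_upper: "(\<Sum>b=0..q. b choose k) = Suc q choose Suc k"
  using sum_choose_upper[of k q] by (simp add: atLeast0AtMost)

lemma sum_binomial_Suc_split:
  "(\<Sum>k=0..Suc n. (Suc n choose k) * g k) =
     (\<Sum>k=0..n. (n choose k) * g k) + (\<Sum>k=0..n. (n choose k) * g (Suc k))"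
proof -
  have "(\<Sum>k=0..Suc n. (Suc n choose k) * g k) = g 0 + (\<Sum>k=0..n. (Suc n choose Suc k) * g (Suc k))"
    by (subst sum.atLeast0_atMost_Suc_shift) simp
  also have "\<dots> = (g 0 + (\<Sum>k=0..n. (n choose Suc k) * g (Suc k))) + (\<Sum>k=0..n. (n choose k) * g (Suc k))"
    by (simp add: sum.distrib algebra_simps)
  also have "g 0 + (\<Sum>k=0..n. (n choose Suc k) * g (Suc k)) = (\<Sum>k=0..Suc n. (n choose k) * g k)"
    by (subst sum.atLeast0_atMost_Suc_shift) simp
  also have "\<dots> = (\<Sum>k=0..n. (n choose k) * g k)"
    by simp
  finally show ?thesis .
qed

lemma ugj_formula_box_sum:
  "(\<Sum>(a, b)\<in>{0..p} \<times> {0..q}. ugj_formula a b n) = ugj_formula p q (Suc n) + ugj_formula p q n"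
proof -
  have "(\<Sum>(a, b)\<in>{0..p} \<times> {0..q}. ugj_formula a b n) =
      (\<Sum>k=0..n. \<Sum>a=0..p. \<Sum>b=0..q. (n choose k) * (b choose k) * ((a + k) choose n))"
    unfolding ugj_formula_def sum.cartesian_product[symmetric]
    by (subst sum.swap, rule sum.cong[OF refl], subst sum.swap) simp
  also have "\<dots> = (\<Sum>k=0..n. (n choose k) * (\<Sum>b=0..q. b choose k) * (\<Sum>a=0..p. (a + k) choose n))"
    by (simp add: sum_distrib_left sum_distrib_right mult.assoc)
  also have "\<dots> = (\<Sum>k=0..n. (n choose k) * (Suc q choose Suc k) * (Suc (p + k) choose Suc n))"
    by (rule sum.cong) (auto simp: sum_choose_shifted_upper sum_atLeast0_choose_upper)
  also have "\<dots> = (\<Sum>k=0..n. (n choose k) * ((q choose k) * ((p + k) choose Suc n)))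
      + (\<Sum>k=0..n. (n choose k) * ((q choose Suc k) * ((p + Suc k) choose Suc n)))
      + (\<Sum>k=0..n. (n choose k) * (q choose k) * ((p + k) choose n))"
    by (simp add: sum.distrib[symmetric] algebra_simps)
  also have "\<dots> = ugj_formula p q (Suc n) + ugj_formula p q n"
    unfolding ugj_formula_def mult.assoc sum_binomial_Suc_split by simp
  finally show ?thesis .
qed

theorem u_eq_ugj_formula: "u (p, q) n = ugj_formula p q n"
proof (induction n arbitrary: p q)
  case 0
  then show ?case by (simp add: u_0 ugj_formula_def)
next
  case (Suc n)
  have "(p, q) \<in> {0..p} \<times> {0..q}" by simp
  from sum.remove[OF _ this, of "\<lambda>(a, b). ugj_formula a b n"] have "(\<Sum>(a, b)\<in>{0..p} \<times> {0..q}. ugj_formula a b n) =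
      ugj_formula p q n + (\<Sum>(a, b)\<in>strictly_below (p, q). ugj_formula a b n)"
    unfolding strictly_below_def by simp
  moreover have "u (p, q) (Suc n) = (\<Sum>(a, b)\<in>strictly_below (p, q). ugj_formula a b n)"
    unfolding u_Suc by (rule sum.cong) (auto simp: Suc.IH)
  ultimately show ?case
    using ugj_formula_box_sum by simp
qed

lemma choose_mult_choose_swap:
  "(a choose i) * ((a + b) choose a) = ((b + i) choose i) * ((a + b) choose (b + i))"
proof (cases "i \<le> a")
  case True
  have "((a + b) choose a) * (a choose i) = ((a + b) choose i) * ((a + b - i) choose (a - i))"
    using True by (intro choose_mult) auto
  moreover have "((a + b) choose (b + i)) * ((b + i) choose i) = ((a + b) choose i) * ((a + b - i) choose b)"
    using True choose_mult[of i "b + i" "a + b"] by simp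
  moreover have "(a + b - i) choose (a - i) = (a + b - i) choose b"
    using True binomial_symmetric[of b "a + b - i"] by simp
  ultimately show ?thesis by (simp add: mult_ac)
qed (simp add: binomial_eq_0)

lemma ugj_formula_eq_trinomial_sum:
  "ugj_formula p q n = (\<Sum>i=0..n. (p choose i) * ((p + n - i) choose p) * (q choose (n - i)))"
proof -
  have "ugj_formula p q n = (\<Sum>i=0..n. (n choose (n - i)) * (q choose (n - i)) * ((p + (n - i)) choose n))"
    unfolding ugj_formula_def by (subst sum.atLeastAtMost_rev) simp
  also have "\<dots> = (\<Sum>i=0..n. (p choose i) * ((p + n - i) choose p) * (q choose (n - i)))"
  proof (rule sum.cong)
    fix i assume "i \<in> {0..n}"
    then have "(p choose i) * ((p + (n - i)) choose p) = (n choose (n - i)) * ((p + (n - i)) choose n)"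
      using choose_mult_choose_swap[of p i "n - i"] binomial_symmetric[of i n] by simp
    then show "(n choose (n - i)) * (q choose (n - i)) * ((p + (n - i)) choose n) =
        (p choose i) * ((p + n - i) choose p) * (q choose (n - i))"
      using \<open>i \<in> {0..n}\<close> by (simp add: mult_ac)
  qed simp
  finally show ?thesis .
qed

theorem mainTheorem10:
  fixes p q n :: nat
  assumes "p \<le> q"
  shows "u (p, q) n = (\<Sum>i=0..n. (p choose i) * ((p + n - i) choose p) * (q choose (n - i)))"
  by (simp add: u_eq_ugj_formula ugj_formula_eq_trinomial_sum)

end
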